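(* For any $n\ge 1$ and any $u\in\mathsf{Tr}(n)$, $\mathrm{in}(u)+\mathrm{out}(u)=n$, where $\mathrm{in}(u)$ (resp. $\mathrm{out}(u)$) is the number of elements of $\mathsf{Tr}(n)$ covered by (resp. covering) $u$.
   Context: A triword of size $n$ is a word $u=u_1\cdots u_n$ with $u_i\in\{0,1,2\}$, $u_1\ne 2$, and such that $u_i=0$ implies $u_j\neq 1$ for all $j>i$; $\mathsf{Tr}(n)$ is their set, ordered componentwise ($u\preccurlyeq v$ iff $u_i\le v_i$ for all $i$). *)

theory Defs
  imports Main
begin

text \<open>Triwords of size n, as lists of naturals (positions 0..n-1 correspond to u_1..u_n).\<close>
definition triword :: "nat \<Rightarrow> nat list \<Rightarrow> bool" where
  "triword n u \<longleftrightarrow> length u = n \<and> (\<forall>i<n. u ! i \<in> {0,1,2}) \<and>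
     (n \<ge> 1 \<longrightarrow> u ! 0 \<noteq> 2) \<and>
     (\<forall>i<n. \<forall>j<n. i < j \<and> u ! i = 0 \<longrightarrow> u ! j \<noteq> 1)"

definition Tr :: "nat \<Rightarrow> nat list set" where
  "Tr n = {u. triword n u}"

definition tw_le :: "nat list \<Rightarrow> nat list \<Rightarrow> bool" where
  "tw_le u v \<longleftrightarrow> length u = length v \<and> (\<forall>i<length u. u ! i \<le> v ! i)"

definition tw_covers :: "nat \<Rightarrow> nat list \<Rightarrow> nat list \<Rightarrow> bool" where
  "tw_covers n u v \<longleftrightarrow> u \<in> Tr n \<and> v \<in> Tr n \<and> tw_le u v \<and> u \<noteq> v \<and>
     \<not> (\<exists>w\<in>Tr n. tw_le u w \<and> tw_le w v \<and> w \<noteq> u \<and> w \<noteq> v)"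

definition tw_in :: "nat \<Rightarrow> nat list \<Rightarrow> nat" where
  "tw_in n u = card {v \<in> Tr n. tw_covers n v u}"

definition tw_out :: "nat \<Rightarrow> nat list \<Rightarrow> nat" where
  "tw_out n u = card {v \<in> Tr n. tw_covers n u v}"

end

theory Submission
  imports Defs
begin

text \<open>A cover in \<open>Tr(n)\<close> changes a single letter, either by one or from 0 to 2 when a letter 1 is
  not admissible at that position. So every letter \<open>u\<^sub>i \<noteq> 1\<close> can be changed in exactly one way
  to give a neighbour of \<open>u\<close> (a triword covering or covered by \<open>u\<close>). A letter 1 can be raised to 2
  unless it is the first letter, and only the last 1 can be lowered to 0; as \<open>u\<close> contains a 1 iff
  \<open>u\<^sub>1 = 1\<close>, the letters 1 also contribute as many neighbours as there are of them. Hence \<open>u\<close> has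
  exactly \<open>n\<close> neighbours, which split into the \<open>in(u)\<close> lower and the \<open>out(u)\<close> upper covers.\<close>

lemma mem_Tr_iff:
  "u \<in> Tr n \<longleftrightarrow> length u = n \<and> (\<forall>i<n. u!i \<le> 2) \<and> (0 < n \<longrightarrow> u!0 \<noteq> 2)
     \<and> (\<forall>i j. i < j \<and> j < n \<and> u!i = 0 \<longrightarrow> u!j \<noteq> 1)"
  unfolding Tr_def triword_def by (auto simp: Suc_le_eq) (meson less_trans)

lemma list_update_mem_Tr_iff:
  assumes "u \<in> Tr n" and "k < n"
  shows "u[k := c] \<in> Tr n \<longleftrightarrow> c \<le> 2 \<and> (k = 0 \<longrightarrow> c \<noteq> 2)
     \<and> (c = 0 \<longrightarrow> (\<forall>j. k < j \<and> j < n \<longrightarrow> u!j \<noteq> 1)) \<and> (c = 1 \<longrightarrow> (\<forall>a<k. u!a \<noteq> 0))"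
  (is "?lhs \<longleftrightarrow> ?rhs")
proof
  assume ?lhs
  then have upd: "\<forall>i<n. u[k := c]!i \<le> 2" "0 < n \<longrightarrow> u[k := c]!0 \<noteq> 2"
      "\<forall>i j. i < j \<and> j < n \<and> u[k := c]!i = 0 \<longrightarrow> u[k := c]!j \<noteq> 1"
    unfolding mem_Tr_iff by auto
  have len: "length u = n"
    using assms(1) unfolding mem_Tr_iff by simp
  show ?rhs
  proof (intro conjI impI allI)
    show "c \<le> 2" using upd(1) assms(2) len by (metis nth_list_update_eq)
  next
    assume "k = 0" then show "c \<noteq> 2" using upd(2) assms(2) len by auto
  next
    fix j assume "c = 0" "k < j \<and> j < n"
    then show "u!j \<noteq> 1" using upd(3)[rule_format, of k j] len by auto
  next
    fix a assume "c = 1" "a < k"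
    then show "u!a \<noteq> 0" using upd(3)[rule_format, of a k] len assms(2) by auto
  qed
next
  assume ?rhs
  then show ?lhs
    using assms unfolding mem_Tr_iff by (auto simp: nth_list_update)
qed

definition zero_before :: "nat list \<Rightarrow> nat \<Rightarrow> bool" where
  "zero_before u i \<longleftrightarrow> (\<exists>a<i. u!a = 0)"

lemma list_update_one_mem_Tr_iff:
  assumes "u \<in> Tr n" and "k < n"
  shows "u[k := 1] \<in> Tr n \<longleftrightarrow> \<not> zero_before u k"
  using list_update_mem_Tr_iff[OF assms] unfolding zero_before_def by auto

lemma list_update_mem_Tr_if_zero_before:
  assumes u: "u \<in> Tr n" and k: "k < n" and "zero_before u k" and "c \<in> {0, 2}"
  shows "u[k := c] \<in> Tr n"
proof -
  obtain a where "a < k" "u!a = 0"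
    using \<open>zero_before u k\<close> unfolding zero_before_def by blast
  then have "\<forall>j. k < j \<and> j < n \<longrightarrow> u!j \<noteq> 1"
    using u unfolding mem_Tr_iff by (meson less_trans)
  with \<open>a < k\<close> \<open>c \<in> {0, 2}\<close> show ?thesis
    unfolding list_update_mem_Tr_iff[OF u k] by auto
qed

lemma Tr_nth_0_eq_one:
  assumes "u \<in> Tr n" and "k < n" and "u!k = 1"
  shows "u!0 = 1"
proof (cases "k = 0")
  case False
  then have "u!0 \<noteq> 0" and "u!0 \<le> 2" and "u!0 \<noteq> 2"
    using assms unfolding mem_Tr_iff by auto
  then show ?thesis by simp
qed (use assms in simp)

lemma tw_le_antisym: "tw_le u v \<Longrightarrow> tw_le v u \<Longrightarrow> u = v"
  unfolding tw_le_def by (metis le_antisym nth_equalityI)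

lemma tw_le_list_update_right_iff: "k < length u \<Longrightarrow> tw_le u (u[k := c]) \<longleftrightarrow> u!k \<le> c"
  unfolding tw_le_def by (auto simp: nth_list_update)

lemma tw_le_between_list_update:
  assumes "tw_le u w" and "tw_le w (u[k := c])"
  shows "w = u[k := w!k]"
proof (rule nth_equalityI)
  show "length w = length (u[k := w!k])"
    using assms(1) unfolding tw_le_def by simp
next
  fix j assume j: "j < length w"
  have "length w = length u" and "u!j \<le> w!j" and "w!j \<le> u[k := c]!j"
    using assms j unfolding tw_le_def by auto
  with j show "w!j = u[k := w!k]!j"
    by (cases "j = k") (auto simp: nth_list_update)
qed

lemma ex_strictly_between_list_update_iff:
  assumes k: "k < length u" and "c \<le> 2"
  shows "(\<exists>w\<in>S. tw_le u w \<and> tw_le w (u[k := c]) \<and> w \<noteq> u \<and> w \<noteq> u[k := c])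
    \<longleftrightarrow> u!k = 0 \<and> c = 2 \<and> u[k := 1] \<in> S"
proof
  assume "\<exists>w\<in>S. tw_le u w \<and> tw_le w (u[k := c]) \<and> w \<noteq> u \<and> w \<noteq> u[k := c]"
  then obtain w where w: "w \<in> S" "tw_le u w" "tw_le w (u[k := c])" "w \<noteq> u" "w \<noteq> u[k := c]"
    by blast
  have w_eq: "w = u[k := w!k]"
    using tw_le_between_list_update w(2,3) .
  have "u!k \<le> w!k" "w!k \<le> c"
    using w(2,3) k unfolding tw_le_def by (auto simp: nth_list_update)
  moreover have "w!k \<noteq> u!k" "w!k \<noteq> c"
    using w(4,5) w_eq by (metis list_update_id)+
  ultimately have "u!k = 0" "w!k = 1" "c = 2"
    using \<open>c \<le> 2\<close> by auto
  with w(1) w_eq show "u!k = 0 \<and> c = 2 \<and> u[k := 1] \<in> S"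
    by simp
next
  assume between: "u!k = 0 \<and> c = 2 \<and> u[k := 1] \<in> S"
  have "tw_le u (u[k := 1])" "tw_le (u[k := 1]) (u[k := c])"
    using between k unfolding tw_le_def by (auto simp: nth_list_update)
  moreover have "u[k := 1] \<noteq> u" "u[k := 1] \<noteq> u[k := c]"
    using between k by (metis nth_list_update_eq n_not_Suc_n numeral_2_eq_2 One_nat_def)+
  ultimately show "\<exists>w\<in>S. tw_le u w \<and> tw_le w (u[k := c]) \<and> w \<noteq> u \<and> w \<noteq> u[k := c]"
    using between by blast
qed

lemma tw_covers_list_update_iff:
  assumes u: "u \<in> Tr n" and v: "u[k := c] \<in> Tr n" and k: "k < n"
  shows "tw_covers n u (u[k := c]) \<longleftrightarrow> u!k < c \<and> \<not> (u!k = 0 \<and> c = 2 \<and> u[k := 1] \<in> Tr n)"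
proof -
  have len: "length u = n" and "c \<le> 2"
    using u v k unfolding mem_Tr_iff by auto
  have "tw_le u (u[k := c]) \<longleftrightarrow> u!k \<le> c"
    using tw_le_list_update_right_iff k len by simp
  moreover have "u \<noteq> u[k := c] \<longleftrightarrow> u!k \<noteq> c"
    using k len by (metis list_update_id nth_list_update_eq)
  ultimately show ?thesis
    unfolding tw_covers_def
    using u v ex_strictly_between_list_update_iff[of k u c "Tr n"] k len \<open>c \<le> 2\<close> by auto
qed

lemma tw_covers_imp_list_update:
  assumes "tw_covers n u v"
  shows "\<exists>k<n. v = u[k := v!k]"
proof -
  have u: "u \<in> Tr n" and v: "v \<in> Tr n" and le: "tw_le u v" and "u \<noteq> v"
    and no_middle: "\<not> (\<exists>w\<in>Tr n. tw_le u w \<and> tw_le w v \<and> w \<noteq> u \<and> w \<noteq> v)"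
    using assms unfolding tw_covers_def by auto
  have len: "length u = n" "length v = n"
    using u v unfolding mem_Tr_iff by auto
  have "\<exists>i<n. u!i \<noteq> v!i"
    using \<open>u \<noteq> v\<close> len nth_equalityI by metis
  define i where "i = (LEAST i. i < n \<and> u!i \<noteq> v!i)"
  have i: "i < n" "u!i \<noteq> v!i"
    using LeastI_ex[OF \<open>\<exists>i<n. u!i \<noteq> v!i\<close>] unfolding i_def by auto
  have agree_before: "u!a = v!a" if "a < i" for a
    using not_less_Least[of a "\<lambda>i. i < n \<and> u!i \<noteq> v!i"] that i(1) unfolding i_def by auto
  have "u!i \<le> v!i"
    using le i(1) len unfolding tw_le_def by auto
  with i(2) have less: "u!i < v!i" by simp
  \<comment> \<open>Taking the first differing position guarantees that a new letter 1 has no 0 before it.\<close>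
  have w: "u[i := v!i] \<in> Tr n"
    unfolding list_update_mem_Tr_iff[OF u i(1)]
  proof (intro conjI impI allI)
    show "v!i \<le> 2" "i = 0 \<Longrightarrow> v!i \<noteq> 2"
      using v i(1) unfolding mem_Tr_iff by auto
  next
    fix j assume "v!i = 0" then show "u!j \<noteq> 1" using less by simp
  next
    fix a assume "v!i = 1" "a < i"
    then show "u!a \<noteq> 0"
      using v i(1) agree_before[of a] unfolding mem_Tr_iff by auto
  qed
  have "tw_le u (u[i := v!i])"
    using tw_le_list_update_right_iff i(1) len less by simp
  moreover have "tw_le (u[i := v!i]) v"
    using le len i(1) unfolding tw_le_def by (auto simp: nth_list_update)
  moreover have "u[i := v!i] \<noteq> u"
    using i len by (metis nth_list_update_eq)
  ultimately have "u[i := v!i] = v"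
    using no_middle w by blast
  with i(1) show ?thesis by metis
qed

definition tw_adjacent :: "nat \<Rightarrow> nat list \<Rightarrow> nat list \<Rightarrow> bool" where
  "tw_adjacent n u v \<longleftrightarrow> tw_covers n u v \<or> tw_covers n v u"

lemma tw_adjacent_imp_list_update:
  assumes "tw_adjacent n u v"
  shows "\<exists>k<n. v = u[k := v!k] \<and> v!k \<noteq> u!k"
proof -
  have "u \<noteq> v"
    using assms unfolding tw_adjacent_def tw_covers_def by auto
  moreover obtain k where "k < n" "v = u[k := v!k]"
  proof (cases "tw_covers n u v")
    case True
    then show ?thesis using tw_covers_imp_list_update that by blast
  next
    case False
    then have "tw_covers n v u" using assms unfolding tw_adjacent_def by blast
    then obtain k where "k < n" "u = v[k := u!k]"
      using tw_covers_imp_list_update by blast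
    then have "v = u[k := v!k]" by (metis list_update_overwrite list_update_id)
    with \<open>k < n\<close> show ?thesis using that by blast
  qed
  ultimately show ?thesis by (metis list_update_id)
qed

lemma tw_adjacent_list_update_iff:
  assumes u: "u \<in> Tr n" and k: "k < n" and c: "c \<noteq> u!k"
  shows "tw_adjacent n u (u[k := c]) \<longleftrightarrow>
    u[k := c] \<in> Tr n \<and> \<not> ({u!k, c} = {0, 2} \<and> u[k := 1] \<in> Tr n)"
proof (cases "u[k := c] \<in> Tr n")
  case False
  then show ?thesis unfolding tw_adjacent_def tw_covers_def by auto
next
  case v: True
  have len: "length u = n"
    using u unfolding mem_Tr_iff by simp
  have up: "tw_covers n u (u[k := c]) \<longleftrightarrow> u!k < c \<and> \<not> (u!k = 0 \<and> c = 2 \<and> u[k := 1] \<in> Tr n)"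
    using tw_covers_list_update_iff[OF u v k] .
  have down: "tw_covers n (u[k := c]) u \<longleftrightarrow> c < u!k \<and> \<not> (c = 0 \<and> u!k = 2 \<and> u[k := 1] \<in> Tr n)"
    using tw_covers_list_update_iff[OF v _ k, of "u!k"] u k len by simp
  show ?thesis
    unfolding tw_adjacent_def up down using c v by (auto simp: doubleton_eq_iff)
qed

definition last_one :: "nat \<Rightarrow> nat list \<Rightarrow> nat" where
  "last_one n u = Max {j. j < n \<and> u!j = 1}"

lemma last_one:
  assumes "i < n" and "u!i = 1"
  shows "last_one n u < n" and "u!(last_one n u) = 1"
    and "\<And>j. last_one n u < j \<Longrightarrow> j < n \<Longrightarrow> u!j \<noteq> 1"
proof -
  have "last_one n u \<in> {j. j < n \<and> u!j = 1}"
    unfolding last_one_def using assms by (intro Max_in) auto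
  then show "last_one n u < n" and "u!(last_one n u) = 1" by auto
  show "u!j \<noteq> 1" if "last_one n u < j" and "j < n" for j
  proof
    assume "u!j = 1"
    with \<open>j < n\<close> have "j \<le> last_one n u"
      unfolding last_one_def by (intro Max_ge) auto
    with \<open>last_one n u < j\<close> show False by simp
  qed
qed

definition neighbour_pos :: "nat \<Rightarrow> nat list \<Rightarrow> nat \<Rightarrow> nat" where
  "neighbour_pos n u i = (if i = 0 \<and> u!0 = 1 then last_one n u else i)"

definition neighbour_val :: "nat list \<Rightarrow> nat \<Rightarrow> nat" where
  "neighbour_val u i =
    (if i = 0 \<and> u!0 = 1 then 0
     else if u!i = 1 then 2
     else if zero_before u i then 2 - u!i
     else 1)"

definition neighbour :: "nat \<Rightarrow> nat list \<Rightarrow> nat \<Rightarrow> nat list" where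
  "neighbour n u i = u[neighbour_pos n u i := neighbour_val u i]"

lemma neighbour_pos_less:
  assumes "i < n"
  shows "neighbour_pos n u i < n"
  using assms last_one(1)[of 0 n u] unfolding neighbour_pos_def by auto

lemma neighbour_val_neq:
  assumes "u \<in> Tr n" and "i < n"
  shows "neighbour_val u i \<noteq> u!(neighbour_pos n u i)"
  using assms last_one(2)[of 0 n u] unfolding neighbour_pos_def neighbour_val_def mem_Tr_iff
  by auto

lemma tw_adjacent_neighbour:
  assumes u: "u \<in> Tr n" and i: "i < n"
  shows "tw_adjacent n u (neighbour n u i)"
proof -
  let ?p = "neighbour_pos n u i" and ?c = "neighbour_val u i"
  have p: "?p < n"
    using neighbour_pos_less[OF i] .
  have adjacent: "u[?p := ?c] \<in> Tr n \<and> \<not> ({u!?p, ?c} = {0, 2} \<and> u[?p := 1] \<in> Tr n)"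
  proof (cases "i = 0 \<and> u!0 = 1")
    case True
    then show ?thesis
      using last_one[of 0 n u] i p unfolding list_update_mem_Tr_iff[OF u p]
      by (auto simp: neighbour_pos_def neighbour_val_def)
  next
    case False
    then have p_i: "?p = i"
      unfolding neighbour_pos_def by auto
    have "u!i \<le> 2"
      using u i unfolding mem_Tr_iff by simp
    consider "u!i = 1" | "u!i \<noteq> 1" "zero_before u i" | "u!i \<noteq> 1" "\<not> zero_before u i"
      by blast
    then show ?thesis
    proof cases
      case 1
      with False have "i \<noteq> 0" by (cases i) auto
      with 1 False show ?thesis
        unfolding p_i list_update_mem_Tr_iff[OF u i] by (simp add: neighbour_val_def doubleton_eq_iff)
    next
      case 2
      with \<open>u!i \<le> 2\<close> have "2 - u!i \<in> {0, 2}"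
        by auto
      with 2 have "u[i := 2 - u!i] \<in> Tr n"
        using list_update_mem_Tr_if_zero_before[OF u i] by blast
      moreover have "u[i := 1] \<notin> Tr n"
        using 2 list_update_one_mem_Tr_iff[OF u i] by simp
      moreover have "neighbour_val u i = 2 - u!i"
        using False 2 unfolding neighbour_val_def by simp
      ultimately show ?thesis
        unfolding p_i by simp
    next
      case 3
      with False have "neighbour_val u i = 1"
        unfolding neighbour_val_def by simp
      with 3 show ?thesis
        using list_update_one_mem_Tr_iff[OF u i] unfolding p_i by (simp add: doubleton_eq_iff)
    qed
  qed
  show ?thesis
    unfolding neighbour_def tw_adjacent_list_update_iff[OF u p neighbour_val_neq[OF u i]]
    by (rule adjacent)
qed

lemma neighbour_0_eq_lower_one:
  assumes u: "u \<in> Tr n" and k: "k < n" and "u!k = 1" and lowered: "u[k := 0] \<in> Tr n"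
  shows "neighbour n u 0 = u[k := 0]"
proof -
  have "u!0 = 1"
    using Tr_nth_0_eq_one[OF u k \<open>u!k = 1\<close>] .
  have "\<not> last_one n u < k"
    using last_one(3)[of k n u k] k \<open>u!k = 1\<close> by auto
  moreover have "\<not> k < last_one n u"
    using last_one(1,2)[of k n u] k \<open>u!k = 1\<close> lowered
    unfolding list_update_mem_Tr_iff[OF u k] by auto
  ultimately have "last_one n u = k" by simp
  with \<open>u!0 = 1\<close> show ?thesis
    unfolding neighbour_def neighbour_pos_def neighbour_val_def by simp
qed

lemma neighbour_eq_list_update:
  assumes u: "u \<in> Tr n" and k: "k < n" and c: "c \<noteq> u!k"
    and adj: "tw_adjacent n u (u[k := c])" and not_lower_one: "\<not> (u!k = 1 \<and> c = 0)"
  shows "neighbour n u k = u[k := c]"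
proof -
  have in_Tr: "u[k := c] \<in> Tr n" and no_skip: "\<not> ({u!k, c} = {0, 2} \<and> u[k := 1] \<in> Tr n)"
    using adj unfolding tw_adjacent_list_update_iff[OF u k c] by blast+
  have "u!k \<le> 2" and "c \<le> 2"
    using u in_Tr k unfolding mem_Tr_iff by auto
  have not_special: "\<not> (k = 0 \<and> u!0 = 1)"
  proof
    assume "k = 0 \<and> u!0 = 1"
    with not_lower_one c \<open>c \<le> 2\<close> have "k = 0" "c = 2"
      by auto
    with in_Tr show False
      unfolding list_update_mem_Tr_iff[OF u k] by simp
  qed
  have "neighbour_val u k = c"
  proof (cases "u!k = 1")
    case True
    with not_lower_one c \<open>c \<le> 2\<close> not_special show ?thesis
      unfolding neighbour_val_def by auto
  next
    case u_k: False
    show ?thesis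
    proof (cases "zero_before u k")
      case True
      then have "c \<noteq> 1"
        using in_Tr list_update_one_mem_Tr_iff[OF u k] by auto
      with True u_k c \<open>c \<le> 2\<close> \<open>u!k \<le> 2\<close> not_special show ?thesis
        unfolding neighbour_val_def by auto
    next
      case False
      then have "{u!k, c} \<noteq> {0, 2}"
        using no_skip list_update_one_mem_Tr_iff[OF u k] by auto
      with False u_k c \<open>c \<le> 2\<close> \<open>u!k \<le> 2\<close> not_special show ?thesis
        unfolding neighbour_val_def by (auto simp: doubleton_eq_iff)
    qed
  qed
  with not_special show ?thesis
    unfolding neighbour_def neighbour_pos_def by auto
qed

lemma tw_adjacent_imp_neighbour:
  assumes u: "u \<in> Tr n" and adj: "tw_adjacent n u v"
  shows "\<exists>i<n. v = neighbour n u i"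
proof -
  obtain k where k: "k < n" and v: "v = u[k := v!k]" and c: "v!k \<noteq> u!k"
    using tw_adjacent_imp_list_update[OF adj] by blast
  show ?thesis
  proof (cases "u!k = 1 \<and> v!k = 0")
    case True
    moreover have "v \<in> Tr n"
      using adj unfolding tw_adjacent_def tw_covers_def by auto
    ultimately have "v = neighbour n u 0"
      using neighbour_0_eq_lower_one[OF u k] v by simp
    with k show ?thesis by (intro exI[of _ 0]) simp
  next
    case False
    with adj v have "v = neighbour n u k"
      using neighbour_eq_list_update[OF u k c] by simp
    with k show ?thesis by blast
  qed
qed

lemma list_update_eq_list_updateD:
  assumes "p < length u" and "c \<noteq> u!p" and "d \<noteq> u!q" and "u[p := c] = u[q := d]"
  shows "p = q \<and> c = d"
proof -
  have "p = q"
  proof (rule ccontr)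
    assume "p \<noteq> q"
    then have "u[p := c]!p = u!p"
      using assms(4) by simp
    with assms(1,2) show False by simp
  qed
  with assms(1,4) show ?thesis by (metis nth_list_update_eq)
qed

lemma inj_on_neighbour:
  assumes u: "u \<in> Tr n"
  shows "inj_on (neighbour n u) {..<n}"
proof (rule inj_onI)
  fix i j assume "i \<in> {..<n}" "j \<in> {..<n}" and eq: "neighbour n u i = neighbour n u j"
  then have i: "i < n" and j: "j < n" by auto
  have "length u = n"
    using u unfolding mem_Tr_iff by simp
  then have pos: "neighbour_pos n u i = neighbour_pos n u j"
    and val: "neighbour_val u i = neighbour_val u j"
    using list_update_eq_list_updateD[OF _ neighbour_val_neq[OF u i] neighbour_val_neq[OF u j]]
      eq neighbour_pos_less[OF i] unfolding neighbour_def by auto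
  have special: "a = b"
    if "a = 0" "u!0 = 1" "b < n" "neighbour_pos n u a = neighbour_pos n u b"
      "neighbour_val u a = neighbour_val u b" for a b
  proof (rule ccontr)
    assume "a \<noteq> b"
    with that(1) have "b \<noteq> 0" by simp
    with that have "u!b = 1"
      using last_one(2)[of 0 n u] unfolding neighbour_pos_def by auto
    with \<open>b \<noteq> 0\<close> have "neighbour_val u b = 2"
      unfolding neighbour_val_def by simp
    moreover have "neighbour_val u a = 0"
      using that(1,2) unfolding neighbour_val_def by simp
    ultimately show False
      using that(5) by simp
  qed
  show "i = j"
  proof (cases "u!0 = 1 \<and> (i = 0 \<or> j = 0)")
    case True
    then show ?thesis
      using special[of i j] special[of j i] i j pos val by auto
  next
    case False
    then show ?thesis
      using pos unfolding neighbour_pos_def by auto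
  qed
qed

lemma Collect_tw_adjacent_eq_image_neighbour:
  assumes "u \<in> Tr n"
  shows "{v. tw_adjacent n u v} = neighbour n u ` {..<n}"
  using tw_adjacent_neighbour[OF assms] tw_adjacent_imp_neighbour[OF assms] by auto

theorem lemma3p4:
  fixes n :: nat and u :: "nat list"
  assumes "n \<ge> 1" and "u \<in> Tr n"
  shows "tw_in n u + tw_out n u = n"
proof -
  let ?below = "{v \<in> Tr n. tw_covers n v u}" and ?above = "{v \<in> Tr n. tw_covers n u v}"
  have union: "?below \<union> ?above = neighbour n u ` {..<n}"
    unfolding Collect_tw_adjacent_eq_image_neighbour[OF assms(2), symmetric]
    unfolding tw_adjacent_def tw_covers_def by auto
  have disjoint: "?below \<inter> ?above = {}"
    unfolding tw_covers_def using tw_le_antisym by blast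
  have finite: "finite (?below \<union> ?above)"
    unfolding union by simp
  have "tw_in n u + tw_out n u = card ?below + card ?above"
    unfolding tw_in_def tw_out_def ..
  also have "\<dots> = card (?below \<union> ?above)"
    using finite disjoint by (simp add: card_Un_disjoint)
  also have "\<dots> = n"
    unfolding union using card_image[OF inj_on_neighbour[OF assms(2)]] by simp
  finally show ?thesis .
qed

end
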